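(* Let $N\ge1$, positive integers $T_k$, positive reals $\beta_k,q_k^t,\eta_k^t,p_k$ ($1\le k\le N$, $1\le t\le T_k$) be given. For each $k$ let $y_k\in\mathcal Y$, $v_k$ a vector in the dual space of the $x$-space, $x_{k-1}\in\mathcal X$, $x_k^0\in\mathcal X$, $z_k^0\in\mathcal Z$, and points $\tilde u_k^t$ ($1\le t\le T_k$) be arbitrary, and define for $t=1,\dots,T_k$ $$z_k^t=\arg\min_{z\in\mathcal Z}h(z)+\langle-\mathcal A\tilde u_k^t,z\rangle+q_k^tU(z_k^{t-1},z),\quad x_k^t=\arg\min_{x\in\mathcal X}\mu\nu(x)+\langle v_k+\mathcal A^\top z_k^t,x\rangle+\eta_k^tV(x_k^{t-1},x)+p_kV(x_{k-1},x),$$ $\hat x_k=\frac1{T_k}\sum_tx_k^t$, $\hat z_k=\frac1{T_k}\sum_tz_k^t$, $\hat w_k=(\hat x_k,y_k,\hat z_k)$. Then for all $w=(x,y,z)\in\mathcal X\times\mathcal Y\times\mathcal Z$, $$\sum_{k=1}^N\beta_kQ(\hat w_k,w)+A+B\le C+D,$$ where $A=\sum_{k=1}^N\beta_k\big[-\langle\hat x_k,y\rangle+\langle x,y_k\rangle+\langle v_k,\hat x_k-x\rangle-\tilde f^*(y_k)+\tilde f^*(y)+\frac{p_k}{T_k}\sum_{t=1}^{T_k}V(x_{k-1},x_k^t)\big]$, $B=\sum_{k=1}^N\frac{\beta_k}{T_k}\sum_{t=1}^{T_k}\big[\langle\mathcal A^\top z_k^t-\mathcal A^\top z,x_k^t-\tilde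 u_k^t\rangle+q_k^tU(z_k^{t-1},z_k^t)+\eta_k^tV(x_k^{t-1},x_k^t)\big]$, $C=\sum_{k=1}^N\frac{\beta_k}{T_k}\sum_{t=1}^{T_k}\big[q_k^tU(z_k^{t-1},z)-q_k^tU(z_k^t,z)\big]$, $D=\sum_{k=1}^N\frac{\beta_k}{T_k}\sum_{t=1}^{T_k}\big[\eta_k^tV(x_k^{t-1},x)-(\mu+\eta_k^t+p_k)V(x_k^t,x)+p_kV(x_{k-1},x)\big]$.
   Context: Setting. $\mathcal X$ closed convex subset of a finite-dimensional space with norm $\|\cdot\|$ (dual $\|\cdot\|_*$); $\mathcal Z$ closed convex subset of a finite-dimensional space with norm $|\cdot|$; $\mathcal A$ linear operator; $h:\mathcal Z\to\mathbb R$ convex; $\mu\ge0$; $\nu:\mathcal X\to\mathbb R$ $1$-strongly convex w.r.t. $\|\cdot\|$; $\tilde f$ convex differentiable with $\tilde L$-Lipschitz gradient, $\tilde f^*$ its convex conjugate, $\mathcal Y=\mathrm{dom}\,\tilde f^*$. $\zeta:\mathcal Z\to\mathbb R$ $1$-strongly convex w.r.t. $|\cdot|$. $U(\hat z,z)=\zeta(z)-\zeta(\hat z)-\langle\zeta'(\hat z),z-\hat z\rangle$ and $V(\hat x,x)=\nu(x)-\nu(\hat x)-\langle\nu'(\hat x),x-\hat x\rangle$ (subgradients $\zeta',\nu'$). Gap function: $Q((\bar x,\bar y,\bar z),(x,y,z))=[\mu\nu(\bar x)+\langle\bar x,y+\mathcal A^\top z\rangle-\tilde f^*(y)-h(z)]-[\mu\nu(x)+\langle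 x,\bar y+\mathcal A^\top\bar z\rangle-\tilde f^*(\bar y)-h(\bar z)]$. *)

theory Defs
  imports "HOL-Analysis.Analysis"
begin

text \<open>A (not necessarily Euclidean) norm on a real vector space.\<close>
definition is_norm :: "('a::real_vector \<Rightarrow> real) \<Rightarrow> bool" where
  "is_norm n \<longleftrightarrow> (\<forall>x. 0 \<le> n x) \<and> (\<forall>x. n x = 0 \<longleftrightarrow> x = 0)
     \<and> (\<forall>a x. n (a *\<^sub>R x) = \<bar>a\<bar> * n x) \<and> (\<forall>x y. n (x + y) \<le> n x + n y)"

text \<open>Dual norm, the dual space being identified with the space itself via the inner product.\<close>
definition dual_norm :: "('a::real_inner \<Rightarrow> real) \<Rightarrow> 'a \<Rightarrow> real" where
  "dual_norm n g = Sup {g \<bullet> x | x. n x \<le> 1}"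

definition strongly_convex_on :: "('a::real_vector \<Rightarrow> real) \<Rightarrow> 'a set \<Rightarrow> ('a \<Rightarrow> real) \<Rightarrow> bool" where
  "strongly_convex_on n S f \<longleftrightarrow>
     (\<forall>a\<in>S. \<forall>b\<in>S. \<forall>l\<in>{0..1}.
        f (l *\<^sub>R a + (1 - l) *\<^sub>R b) \<le> l * f a + (1 - l) * f b - l * (1 - l) / 2 * (n (a - b))\<^sup>2)"

definition bregman :: "('a::real_inner \<Rightarrow> real) \<Rightarrow> ('a \<Rightarrow> 'a) \<Rightarrow> 'a \<Rightarrow> 'a \<Rightarrow> real" where
  "bregman phi phi' a b = phi b - phi a - phi' a \<bullet> (b - a)"

text \<open>Convex conjugate (real-valued on its effective domain) and its domain.\<close>
definition conj_dom :: "('a::real_inner \<Rightarrow> real) \<Rightarrow> 'a set" where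
  "conj_dom f = {y. bdd_above (range (\<lambda>x. x \<bullet> y - f x))}"

definition conj :: "('a::real_inner \<Rightarrow> real) \<Rightarrow> 'a \<Rightarrow> real" where
  "conj f y = (SUP x. x \<bullet> y - f x)"

text \<open>Gap function Q((xb,yb,zb),(x,y,z)); fs plays the role of the conjugate.\<close>
definition Qgap :: "real \<Rightarrow> ('x::euclidean_space \<Rightarrow> real) \<Rightarrow> ('x \<Rightarrow> 'z::euclidean_space)
    \<Rightarrow> ('x \<Rightarrow> real) \<Rightarrow> ('z \<Rightarrow> real) \<Rightarrow> 'x \<times> 'x \<times> 'z \<Rightarrow> 'x \<times> 'x \<times> 'z \<Rightarrow> real" where
  "Qgap mu nu Aop fs h = (\<lambda>(xb, yb, zb) (x, y, z).
     (mu * nu xb + xb \<bullet> (y + adjoint Aop z) - fs y - h z)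
     - (mu * nu x + x \<bullet> (yb + adjoint Aop zb) - fs yb - h zb))"

end

theory Submission
  imports Defs
begin

(* Each inner iteration t of epoch k consists of two Bregman proximal steps. For a proximal
   step the three-point inequality holds: the first-order optimality condition of the minimizer,
   with the Bregman distance absorbing the linearization error of the prox function. Applied to
   the z-step and the x-step and added, it bounds L(x_k^t, z) - L(x, z_k^t) plus the B-terms by the
   C- and D-terms, where L(x, z) = mu nu(x) + <x, v_k + A^T z> - h(z). As L is convex in x and
   concave in z, averaging over t (Jensen) passes to the averages hat x_k and hat z_k, and adding
   the y- and f*-terms of A to Q(hat w_k, w) gives exactly L(hat x_k, z) - L(x, hat z_k). *)

lemma strongly_convex_on_imp_convex_on:
  assumes "strongly_convex_on n S f" and "convex S"
  shows "convex_on S f"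
proof (rule convex_onI)
  fix t :: real and a b
  assume "0 < t" "t < 1" "a \<in> S" "b \<in> S"
  moreover have "1 - t \<in> {0..1}"
    using \<open>0 < t\<close> \<open>t < 1\<close> by simp
  ultimately have "f ((1 - t) *\<^sub>R a + (1 - (1 - t)) *\<^sub>R b)
      \<le> (1 - t) * f a + (1 - (1 - t)) * f b - (1 - t) * (1 - (1 - t)) / 2 * (n (a - b))\<^sup>2"
    using assms(1) unfolding strongly_convex_on_def by blast
  moreover have "0 \<le> (1 - t) * t / 2 * (n (a - b))\<^sup>2"
    using \<open>0 < t\<close> \<open>t < 1\<close> by simp
  ultimately show "f ((1 - t) *\<^sub>R a + t *\<^sub>R b) \<le> (1 - t) * f a + t * f b"
    by simp
qed (rule assms(2))

lemma convex_on_inner_right: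
  fixes a :: "'a::real_inner"
  assumes "convex S"
  shows "convex_on S (\<lambda>x. a \<bullet> x)"
  using assms by (simp add: convex_on_def inner_add_right)

lemma concave_on_inner_right:
  fixes a :: "'a::real_inner"
  assumes "convex S"
  shows "concave_on S (\<lambda>x. a \<bullet> x)"
  using assms by (simp add: concave_on_def convex_on_def inner_add_right)

lemma convex_on_average_le:
  assumes "convex_on S f" and "finite I" and "I \<noteq> {}" and "\<forall>i\<in>I. y i \<in> S"
  shows "f ((1 / real (card I)) *\<^sub>R (\<Sum>i\<in>I. y i)) \<le> (1 / real (card I)) * (\<Sum>i\<in>I. f (y i))"
  using convex_on_sum[OF assms(2,3,1), of "\<lambda>_. 1 / real (card I)" y] assms
  by (simp add: scaleR_sum_right sum_distrib_left)

lemma concave_on_average_ge: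
  assumes "concave_on S f" and "finite I" and "I \<noteq> {}" and "\<forall>i\<in>I. y i \<in> S"
  shows "(1 / real (card I)) * (\<Sum>i\<in>I. f (y i)) \<le> f ((1 / real (card I)) *\<^sub>R (\<Sum>i\<in>I. y i))"
  using concave_on_sum[OF assms(2,3,1), of "\<lambda>_. 1 / real (card I)" y] assms
  by (simp add: scaleR_sum_right sum_distrib_left)

lemma gap_of_averages_le_average:
  fixes L :: "'a::real_vector \<Rightarrow> 'b::real_vector \<Rightarrow> real"
  assumes "convex_on X (\<lambda>x'. L x' z)" and "concave_on Z (\<lambda>z'. L x z')"
    and "finite I" and "I \<noteq> {}" and "\<forall>i\<in>I. xs i \<in> X \<and> zs i \<in> Z"
    and "\<forall>i\<in>I. L (xs i) z - L x (zs i) + a i \<le> b i"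
  shows "L ((1 / real (card I)) *\<^sub>R (\<Sum>i\<in>I. xs i)) z - L x ((1 / real (card I)) *\<^sub>R (\<Sum>i\<in>I. zs i))
           + (1 / real (card I)) * (\<Sum>i\<in>I. a i)
         \<le> (1 / real (card I)) * (\<Sum>i\<in>I. b i)"
proof -
  have "(\<Sum>i\<in>I. L (xs i) z - L x (zs i) + a i) / real (card I) \<le> (\<Sum>i\<in>I. b i) / real (card I)"
    using assms(6) by (intro divide_right_mono sum_mono) simp_all
  then have "(1 / real (card I)) * (\<Sum>i\<in>I. L (xs i) z) - (1 / real (card I)) * (\<Sum>i\<in>I. L x (zs i))
      + (1 / real (card I)) * (\<Sum>i\<in>I. a i) \<le> (1 / real (card I)) * (\<Sum>i\<in>I. b i)"
    by (simp add: sum.distrib sum_subtractf add_divide_distrib diff_divide_distrib)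
  moreover have "L ((1 / real (card I)) *\<^sub>R (\<Sum>i\<in>I. xs i)) z \<le> (1 / real (card I)) * (\<Sum>i\<in>I. L (xs i) z)"
    using assms by (intro convex_on_average_le) auto
  moreover have "(1 / real (card I)) * (\<Sum>i\<in>I. L x (zs i)) \<le> L x ((1 / real (card I)) *\<^sub>R (\<Sum>i\<in>I. zs i))"
    using assms by (intro concave_on_average_ge) auto
  ultimately show ?thesis by linarith
qed

lemma difference_quotient_along_segment:
  fixes S :: "'a::real_inner set"
  assumes "convex S" and "m \<in> S" and "w \<in> S"
    and der: "(phi has_derivative (\<lambda>d. g \<bullet> d)) (at m within S)"
  shows "((\<lambda>s. (phi (m + s *\<^sub>R (w - m)) - phi m) / s) \<longlongrightarrow> g \<bullet> (w - m)) (at_right 0)"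
proof -
  let ?\<gamma> = "\<lambda>s::real. m + s *\<^sub>R (w - m)"
  have "?\<gamma> ` {0..1} \<subseteq> S"
  proof
    fix a assume "a \<in> ?\<gamma> ` {0..1}"
    then obtain s where "s \<in> {0..1}" "a = (1 - s) *\<^sub>R m + s *\<^sub>R w"
      by (auto simp: algebra_simps)
    then show "a \<in> S" using assms(1-3) by (auto intro: convexD)
  qed
  then have "(phi has_derivative (\<lambda>d. g \<bullet> d)) (at (?\<gamma> 0) within ?\<gamma> ` {0..1})"
    using has_derivative_subset[OF der] by simp
  moreover have "(?\<gamma> has_derivative (\<lambda>s. s *\<^sub>R (w - m))) (at 0 within {0..1})"
    by (auto intro!: derivative_eq_intros)
  ultimately have "((\<lambda>s. phi (?\<gamma> s)) has_derivative (\<lambda>s. g \<bullet> (s *\<^sub>R (w - m)))) (at 0 within {0..1})"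
    using has_derivative_in_compose by (fastforce simp: o_def)
  moreover have "(\<lambda>s. g \<bullet> (s *\<^sub>R (w - m))) = (*) (g \<bullet> (w - m))"
    by (simp add: fun_eq_iff)
  ultimately have "((\<lambda>s. phi (?\<gamma> s)) has_field_derivative g \<bullet> (w - m)) (at_right 0)"
    by (simp add: has_field_derivative_def at_within_Icc_at_right)
  then show ?thesis
    by (simp add: has_field_derivative_iff)
qed

lemma minimizer_variational_inequality:
  fixes S :: "'a::real_inner set"
  assumes "convex S" and "convex_on S g" and "c \<ge> 0" and "m \<in> S" and "w \<in> S"
    and "(phi has_derivative (\<lambda>d. phi' m \<bullet> d)) (at m within S)"
    and min: "\<forall>w\<in>S. g m + c * phi m \<le> g w + c * phi w"
  shows "0 \<le> g w - g m + c * (phi' m \<bullet> (w - m))"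
proof (rule tendsto_lowerbound)
  let ?\<gamma> = "\<lambda>s::real. m + s *\<^sub>R (w - m)"
  show "((\<lambda>s. g w - g m + c * ((phi (?\<gamma> s) - phi m) / s)) \<longlongrightarrow> g w - g m + c * (phi' m \<bullet> (w - m)))
      (at_right 0)"
    using assms by (intro tendsto_intros difference_quotient_along_segment)
  have "\<forall>\<^sub>F s in at_right (0::real). s \<in> {0<..<1}"
    by (simp add: eventually_at_right_field) (auto intro: exI[of _ 1])
  then show "\<forall>\<^sub>F s in at_right 0. 0 \<le> g w - g m + c * ((phi (?\<gamma> s) - phi m) / s)"
  proof (rule eventually_mono)
    fix s :: real assume s: "s \<in> {0<..<1}"
    have \<gamma>s: "?\<gamma> s = (1 - s) *\<^sub>R m + s *\<^sub>R w"
      by (simp add: algebra_simps)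
    have "?\<gamma> s \<in> S"
      unfolding \<gamma>s using assms(1,4,5) s by (intro convexD) auto
    then have "g m + c * phi m \<le> g (?\<gamma> s) + c * phi (?\<gamma> s)"
      using min by blast
    moreover have "g (?\<gamma> s) \<le> (1 - s) * g m + s * g w"
      using s assms(2,4,5) unfolding \<gamma>s convex_on_def by auto
    ultimately have "0 \<le> s * (g w - g m) + c * (phi (?\<gamma> s) - phi m)"
      by (simp add: algebra_simps)
    then have "0 \<le> (s * (g w - g m) + c * (phi (?\<gamma> s) - phi m)) / s"
      using s by simp
    also have "\<dots> = g w - g m + c * ((phi (?\<gamma> s) - phi m) / s)"
      using s by (simp add: field_simps)
    finally show "0 \<le> g w - g m + c * ((phi (?\<gamma> s) - phi m) / s)" .
  qed
qed simp

lemma bregman_three_point: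
  fixes S :: "'a::real_inner set"
  assumes "convex S" and "convex_on S g" and "c \<ge> 0" and "m \<in> S" and "w \<in> S"
    and der: "(phi has_derivative (\<lambda>d. phi' m \<bullet> d)) (at m within S)"
    and F: "\<forall>w\<in>S. F w = g w + c * phi w + L \<bullet> w + K"
    and min: "\<forall>w\<in>S. F m \<le> F w"
  shows "F m + c * bregman phi phi' m w \<le> F w"
proof -
  have "convex_on S (\<lambda>w. g w + L \<bullet> w + K)"
    using assms(1,2) by (intro convex_on_add convex_on_inner_right) (simp_all add: convex_on_const)
  moreover have "\<forall>w\<in>S. (g m + L \<bullet> m + K) + c * phi m \<le> (g w + L \<bullet> w + K) + c * phi w"
    using F min assms(4) by (simp add: algebra_simps)
  ultimately have "0 \<le> (g w + L \<bullet> w + K) - (g m + L \<bullet> m + K) + c * (phi' m \<bullet> (w - m))"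
    using assms(1,3-5) der by (intro minimizer_variational_inequality)
  then show ?thesis
    using F assms(4,5) by (simp add: bregman_def inner_diff_right algebra_simps)
qed

lemma bregman_prox_step:
  fixes S :: "'a::real_inner set"
  assumes "convex S" and "convex_on S g" and "c \<ge> 0" and "m \<in> S" and "w \<in> S"
    and "(phi has_derivative (\<lambda>d. phi' m \<bullet> d)) (at m within S)"
    and "\<forall>w\<in>S. g m + L \<bullet> m + c * bregman phi phi' a m \<le> g w + L \<bullet> w + c * bregman phi phi' a w"
  shows "g m + L \<bullet> m + c * bregman phi phi' a m + c * bregman phi phi' m w
         \<le> g w + L \<bullet> w + c * bregman phi phi' a w"
  using bregman_three_point[where F = "\<lambda>w. g w + L \<bullet> w + c * bregman phi phi' a w"
      and L = "L - c *\<^sub>R phi' a" and phi = phi and phi' = phi' and K = "- c * (phi a - phi' a \<bullet> a)", OF assms(1-6)] assms(7)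
  by (simp add: bregman_def inner_diff_left inner_diff_right algebra_simps)

lemma bregman_prox_step_two_centers:
  fixes S :: "'a::real_inner set"
  assumes "convex S" and "mu \<ge> 0" and "e \<ge> 0" and "p \<ge> 0" and "m \<in> S" and "w \<in> S"
    and "(phi has_derivative (\<lambda>d. phi' m \<bullet> d)) (at m within S)"
    and "\<forall>w\<in>S. mu * phi m + L \<bullet> m + e * bregman phi phi' a m + p * bregman phi phi' b m
               \<le> mu * phi w + L \<bullet> w + e * bregman phi phi' a w + p * bregman phi phi' b w"
  shows "mu * phi m + L \<bullet> m + e * bregman phi phi' a m + p * bregman phi phi' b m
           + (mu + e + p) * bregman phi phi' m w
         \<le> mu * phi w + L \<bullet> w + e * bregman phi phi' a w + p * bregman phi phi' b w"
  using bregman_three_point[where g = "\<lambda>_. 0" and c = "mu + e + p" and S = S and m = m and w = w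
      and phi = phi and phi' = phi'
      and F = "\<lambda>w. mu * phi w + L \<bullet> w + e * bregman phi phi' a w + p * bregman phi phi' b w"
      and L = "L - e *\<^sub>R phi' a - p *\<^sub>R phi' b"
      and K = "- e * (phi a - phi' a \<bullet> a) - p * (phi b - phi' b \<bullet> b)"] assms
  by (simp add: convex_on_const bregman_def inner_diff_left inner_diff_right algebra_simps)

(* The coupling function of Qgap with the dual variable y frozen at v, so that the conjugate
   terms drop out. *)
definition lagrangian :: "real \<Rightarrow> ('x::euclidean_space \<Rightarrow> real) \<Rightarrow> ('x \<Rightarrow> 'z::euclidean_space)
    \<Rightarrow> ('z \<Rightarrow> real) \<Rightarrow> 'x \<Rightarrow> 'x \<Rightarrow> 'z \<Rightarrow> real" where
  "lagrangian mu nu Aop h v x z = mu * nu x + x \<bullet> (v + adjoint Aop z) - h z"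

lemma Qgap_eq_lagrangian_gap:
  "Qgap mu nu Aop fs h (xb, yb, zb) (x, y, z) + (- (xb \<bullet> y) + x \<bullet> yb + v \<bullet> (xb - x) - fs yb + fs y)
   = lagrangian mu nu Aop h v xb z - lagrangian mu nu Aop h v x zb"
  by (simp add: Qgap_def lagrangian_def inner_add_right inner_diff_right inner_commute)

lemma convex_on_lagrangian:
  assumes "convex_on X nu" and "mu \<ge> 0"
  shows "convex_on X (\<lambda>x. lagrangian mu nu Aop h v x z)"
proof -
  have "convex X"
    using assms(1) by (rule convex_on_imp_convex)
  then have "convex_on X (\<lambda>x. mu * nu x + (v + adjoint Aop z) \<bullet> x - h z)"
    using assms by (intro convex_on_diff convex_on_add convex_on_cmul convex_on_inner_right)
      (simp_all add: concave_on_const)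
  then show ?thesis
    by (simp add: lagrangian_def inner_commute)
qed

lemma concave_on_lagrangian:
  assumes "linear Aop" and "convex_on Z h"
  shows "concave_on Z (\<lambda>z. lagrangian mu nu Aop h v x z)"
proof -
  have "convex Z"
    using assms(2) by (rule convex_on_imp_convex)
  then have "concave_on Z (\<lambda>z. (mu * nu x + x \<bullet> v) + Aop x \<bullet> z - h z)"
    using assms by (intro concave_on_diff concave_on_add concave_on_inner_right)
      (simp_all add: concave_on_const)
  then show ?thesis
    using assms(1) by (simp add: lagrangian_def inner_add_right adjoint_works add.assoc)
qed

lemma iteration_gap_bound:
  fixes X :: "'x::euclidean_space set" and Z :: "'z::euclidean_space set" and Aop :: "'x \<Rightarrow> 'z"
  assumes "convex X" and "convex Z" and "linear Aop" and "convex_on Z h"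
    and "mu \<ge> 0" and "p \<ge> 0" and "q \<ge> 0" and "eta \<ge> 0"
    and "(nu has_derivative (\<lambda>d. nu' x1 \<bullet> d)) (at x1 within X)"
    and "(zeta has_derivative (\<lambda>d. zeta' z1 \<bullet> d)) (at z1 within Z)"
    and "z1 \<in> Z" "\<forall>z'\<in>Z. h z1 + (- Aop u) \<bullet> z1 + q * bregman zeta zeta' z0 z1
                              \<le> h z' + (- Aop u) \<bullet> z' + q * bregman zeta zeta' z0 z'"
    and "x1 \<in> X" "\<forall>x'\<in>X. mu * nu x1 + (v + adjoint Aop z1) \<bullet> x1
                                + eta * bregman nu nu' x0 x1 + p * bregman nu nu' b x1
                              \<le> mu * nu x' + (v + adjoint Aop z1) \<bullet> x'
                                + eta * bregman nu nu' x0 x' + p * bregman nu nu' b x'"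
    and "x \<in> X" and "z \<in> Z"
  shows "lagrangian mu nu Aop h v x1 z - lagrangian mu nu Aop h v x z1
           + (p * bregman nu nu' b x1 + ((adjoint Aop z1 - adjoint Aop z) \<bullet> (x1 - u)
              + q * bregman zeta zeta' z0 z1 + eta * bregman nu nu' x0 x1))
         \<le> (q * bregman zeta zeta' z0 z - q * bregman zeta zeta' z1 z)
           + (eta * bregman nu nu' x0 x - (mu + eta + p) * bregman nu nu' x1 x + p * bregman nu nu' b x)"
proof -
  have "h z1 + (- Aop u) \<bullet> z1 + q * bregman zeta zeta' z0 z1 + q * bregman zeta zeta' z1 z
        \<le> h z + (- Aop u) \<bullet> z + q * bregman zeta zeta' z0 z"
    using assms by (intro bregman_prox_step) auto
  moreover have "mu * nu x1 + (v + adjoint Aop z1) \<bullet> x1 + eta * bregman nu nu' x0 x1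
        + p * bregman nu nu' b x1 + (mu + eta + p) * bregman nu nu' x1 x
      \<le> mu * nu x + (v + adjoint Aop z1) \<bullet> x + eta * bregman nu nu' x0 x + p * bregman nu nu' b x"
    using assms by (intro bregman_prox_step_two_centers) auto
  moreover have "Aop u \<bullet> z1 = u \<bullet> adjoint Aop z1" and "Aop u \<bullet> z = u \<bullet> adjoint Aop z"
    using assms(3) by (simp_all add: adjoint_works)
  ultimately show ?thesis
    by (simp add: lagrangian_def inner_diff_left inner_diff_right inner_add_left inner_add_right inner_commute)
qed

lemma epoch_gap_bound:
  fixes X :: "'x::euclidean_space set" and Z :: "'z::euclidean_space set" and Aop :: "'x \<Rightarrow> 'z"
    and T :: nat and xs u :: "nat \<Rightarrow> 'x" and zs :: "nat \<Rightarrow> 'z"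
  defines "xh \<equiv> (1 / real T) *\<^sub>R (\<Sum>t=1..T. xs t)" and "zh \<equiv> (1 / real T) *\<^sub>R (\<Sum>t=1..T. zs t)"
  assumes "convex X" and "convex Z" and "linear Aop" and "convex_on Z h" and "convex_on X nu"
    and "mu \<ge> 0" and "T \<ge> 1" and "beta \<ge> 0" and "p \<ge> 0" and "\<forall>t\<in>{1..T}. q t \<ge> 0 \<and> eta t \<ge> 0"
    and "\<forall>a\<in>X. (nu has_derivative (\<lambda>d. nu' a \<bullet> d)) (at a within X)"
    and "\<forall>a\<in>Z. (zeta has_derivative (\<lambda>d. zeta' a \<bullet> d)) (at a within Z)"
    and "\<forall>t\<in>{1..T}. zs t \<in> Z \<and>
        (\<forall>z'\<in>Z. h (zs t) + (- Aop (u t)) \<bullet> zs t + q t * bregman zeta zeta' (zs (t - 1)) (zs t)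
                 \<le> h z' + (- Aop (u t)) \<bullet> z' + q t * bregman zeta zeta' (zs (t - 1)) z')"
    and "\<forall>t\<in>{1..T}. xs t \<in> X \<and>
        (\<forall>x'\<in>X. mu * nu (xs t) + (v + adjoint Aop (zs t)) \<bullet> xs t
                   + eta t * bregman nu nu' (xs (t - 1)) (xs t) + p * bregman nu nu' b (xs t)
                 \<le> mu * nu x' + (v + adjoint Aop (zs t)) \<bullet> x'
                   + eta t * bregman nu nu' (xs (t - 1)) x' + p * bregman nu nu' b x')"
    and "x \<in> X" and "z \<in> Z"
  shows "beta * Qgap mu nu Aop fs h (xh, ys, zh) (x, y, z)
      + beta * (- (xh \<bullet> y) + x \<bullet> ys + v \<bullet> (xh - x) - fs ys + fs y
               + p / real T * (\<Sum>t=1..T. bregman nu nu' b (xs t)))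
      + beta / real T * (\<Sum>t=1..T. (adjoint Aop (zs t) - adjoint Aop z) \<bullet> (xs t - u t)
               + q t * bregman zeta zeta' (zs (t - 1)) (zs t) + eta t * bregman nu nu' (xs (t - 1)) (xs t))
    \<le> beta / real T * (\<Sum>t=1..T. q t * bregman zeta zeta' (zs (t - 1)) z - q t * bregman zeta zeta' (zs t) z)
      + beta / real T * (\<Sum>t=1..T. eta t * bregman nu nu' (xs (t - 1)) x
               - (mu + eta t + p) * bregman nu nu' (xs t) x + p * bregman nu nu' b x)"
proof -
  let ?L = "lagrangian mu nu Aop h v"
  let ?B = "\<lambda>t. (adjoint Aop (zs t) - adjoint Aop z) \<bullet> (xs t - u t)
               + q t * bregman zeta zeta' (zs (t - 1)) (zs t) + eta t * bregman nu nu' (xs (t - 1)) (xs t)"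
  let ?C = "\<lambda>t. q t * bregman zeta zeta' (zs (t - 1)) z - q t * bregman zeta zeta' (zs t) z"
  let ?D = "\<lambda>t. eta t * bregman nu nu' (xs (t - 1)) x - (mu + eta t + p) * bregman nu nu' (xs t) x
               + p * bregman nu nu' b x"
  have step: "\<forall>t\<in>{1..T}. ?L (xs t) z - ?L x (zs t) + (p * bregman nu nu' b (xs t) + ?B t) \<le> ?C t + ?D t"
  proof
    fix t assume "t \<in> {1..T}"
    then show "?L (xs t) z - ?L x (zs t) + (p * bregman nu nu' b (xs t) + ?B t) \<le> ?C t + ?D t"
      using assms by (intro iteration_gap_bound) auto
  qed
  have "?L xh z - ?L x zh + (1 / real T) * (\<Sum>t=1..T. p * bregman nu nu' b (xs t) + ?B t)
      \<le> (1 / real T) * (\<Sum>t=1..T. ?C t + ?D t)"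
    unfolding xh_def zh_def
    by (rule gap_of_averages_le_average[where L = ?L and I = "{1..T}" and X = X and Z = Z,
          unfolded card_atLeastAtMost diff_Suc_1])
      (use assms step in \<open>auto intro: convex_on_lagrangian concave_on_lagrangian\<close>)
  then have "beta * (?L xh z - ?L x zh + (1 / real T) * (\<Sum>t=1..T. p * bregman nu nu' b (xs t) + ?B t))
      \<le> beta * ((1 / real T) * (\<Sum>t=1..T. ?C t + ?D t))"
    using assms by (intro mult_left_mono) auto
  moreover have "?L xh z - ?L x zh = Qgap mu nu Aop fs h (xh, ys, zh) (x, y, z)
      + (- (xh \<bullet> y) + x \<bullet> ys + v \<bullet> (xh - x) - fs ys + fs y)"
    by (rule Qgap_eq_lagrangian_gap[symmetric])
  ultimately show ?thesis
    using \<open>T \<ge> 1\<close> by (simp add: sum.distrib ring_distribs flip: sum_distrib_left)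
qed

theorem proposition5p1:
  fixes X :: "'x::euclidean_space set" and Z :: "'z::euclidean_space set"
    and nx :: "'x \<Rightarrow> real" and nz :: "'z \<Rightarrow> real"
    and Aop :: "'x \<Rightarrow> 'z" and h :: "'z \<Rightarrow> real" and mu :: real
    and nu :: "'x \<Rightarrow> real" and nu' :: "'x \<Rightarrow> 'x"
    and zeta :: "'z \<Rightarrow> real" and zeta' :: "'z \<Rightarrow> 'z"
    and ft :: "'x \<Rightarrow> real" and gft :: "'x \<Rightarrow> 'x" and Lt :: real
    and N :: nat and T :: "nat \<Rightarrow> nat"
    and beta :: "nat \<Rightarrow> real" and p :: "nat \<Rightarrow> real"
    and q :: "nat \<Rightarrow> nat \<Rightarrow> real" and eta :: "nat \<Rightarrow> nat \<Rightarrow> real"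
    and ys :: "nat \<Rightarrow> 'x" and v :: "nat \<Rightarrow> 'x" and xp :: "nat \<Rightarrow> 'x"
    and xs :: "nat \<Rightarrow> nat \<Rightarrow> 'x" and zs :: "nat \<Rightarrow> nat \<Rightarrow> 'z" and u :: "nat \<Rightarrow> nat \<Rightarrow> 'x"
    and x :: 'x and y :: 'x and z :: 'z
  assumes X: "closed X" "convex X"
    and Z: "closed Z" "convex Z"
    and norms: "is_norm nx" "is_norm nz"
    and A_lin: "linear Aop"
    and h_cvx: "convex_on Z h"
    and mu: "mu \<ge> 0"
    and nu_sc: "strongly_convex_on nx X nu"
    and nu_grad: "\<forall>a\<in>X. (nu has_derivative (\<lambda>d. nu' a \<bullet> d)) (at a within X)"
    and zeta_sc: "strongly_convex_on nz Z zeta"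
    and zeta_grad: "\<forall>a\<in>Z. (zeta has_derivative (\<lambda>d. zeta' a \<bullet> d)) (at a within Z)"
    and ft_cvx: "convex_on UNIV ft"
    and ft_grad: "\<forall>a. (ft has_derivative (\<lambda>d. gft a \<bullet> d)) (at a)"
    and ft_lip: "\<forall>a b. dual_norm nx (gft a - gft b) \<le> Lt * nx (a - b)"
    and N: "N \<ge> 1"
    and pos: "\<forall>k\<in>{1..N}. T k \<ge> 1 \<and> beta k > 0 \<and> p k > 0
                 \<and> (\<forall>t\<in>{1..T k}. q k t > 0 \<and> eta k t > 0)"
    and pts: "\<forall>k\<in>{1..N}. ys k \<in> conj_dom ft \<and> xp (k - 1) \<in> X \<and> xs k 0 \<in> X \<and> zs k 0 \<in> Z"
    and z_argmin: "\<forall>k\<in>{1..N}. \<forall>t\<in>{1..T k}. zs k t \<in> Z \<and>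
        (\<forall>z'\<in>Z. h (zs k t) + (- Aop (u k t)) \<bullet> zs k t + q k t * bregman zeta zeta' (zs k (t - 1)) (zs k t)
                 \<le> h z' + (- Aop (u k t)) \<bullet> z' + q k t * bregman zeta zeta' (zs k (t - 1)) z')"
    and x_argmin: "\<forall>k\<in>{1..N}. \<forall>t\<in>{1..T k}. xs k t \<in> X \<and>
        (\<forall>x'\<in>X. mu * nu (xs k t) + (v k + adjoint Aop (zs k t)) \<bullet> xs k t
                   + eta k t * bregman nu nu' (xs k (t - 1)) (xs k t) + p k * bregman nu nu' (xp (k - 1)) (xs k t)
                 \<le> mu * nu x' + (v k + adjoint Aop (zs k t)) \<bullet> x'
                   + eta k t * bregman nu nu' (xs k (t - 1)) x' + p k * bregman nu nu' (xp (k - 1)) x')"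
    and w: "x \<in> X" "y \<in> conj_dom ft" "z \<in> Z"
  shows
   "let xh = (\<lambda>k. (1 / real (T k)) *\<^sub>R (\<Sum>t=1..T k. xs k t));
        zh = (\<lambda>k. (1 / real (T k)) *\<^sub>R (\<Sum>t=1..T k. zs k t));
        V = bregman nu nu'; U = bregman zeta zeta'; At = adjoint Aop; fs = conj ft;
        A = (\<Sum>k=1..N. beta k * (- (xh k \<bullet> y) + x \<bullet> ys k + v k \<bullet> (xh k - x) - fs (ys k) + fs y
               + p k / real (T k) * (\<Sum>t=1..T k. V (xp (k - 1)) (xs k t))));
        B = (\<Sum>k=1..N. beta k / real (T k) * (\<Sum>t=1..T k.
               (At (zs k t) - At z) \<bullet> (xs k t - u k t) + q k t * U (zs k (t - 1)) (zs k t)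
               + eta k t * V (xs k (t - 1)) (xs k t)));
        C = (\<Sum>k=1..N. beta k / real (T k) * (\<Sum>t=1..T k.
               q k t * U (zs k (t - 1)) z - q k t * U (zs k t) z));
        D = (\<Sum>k=1..N. beta k / real (T k) * (\<Sum>t=1..T k.
               eta k t * V (xs k (t - 1)) x - (mu + eta k t + p k) * V (xs k t) x + p k * V (xp (k - 1)) x))
    in (\<Sum>k=1..N. beta k * Qgap mu nu Aop fs h (xh k, ys k, zh k) (x, y, z)) + A + B \<le> C + D"
proof -
  have nu_cvx: "convex_on X nu"
    using nu_sc X(2) by (rule strongly_convex_on_imp_convex_on)
  show ?thesis
    unfolding Let_def sum.distrib[symmetric]
    by (rule sum_mono, rule epoch_gap_bound)
      (use X Z A_lin h_cvx nu_cvx mu pos nu_grad zeta_grad z_argmin x_argmin w in \<open>auto simp: less_imp_le\<close>)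
qed

end
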